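(* Let $X$ be a space with $e(X)>\omega$ and $Y$ a $T_1$ space with $c(Y)>\omega$. Then $X\times Y$ is not set star Lindelöf.
   Context: $e(X)$ is the supremum of cardinalities of closed discrete subsets of $X$; $c(Y)$ is the supremum of cardinalities of families of pairwise disjoint nonempty open subsets of $Y$. For a family $\mathcal U$ of subsets of $Z$ and $A\subseteq Z$, $st(A,\mathcal U)=\bigcup\{U\in\mathcal U: U\cap A\neq\emptyset\}$. A space $Z$ is set star Lindelöf if for every nonempty $A\subseteq Z$ and every family $\mathcal U$ of open subsets with $\overline A\subseteq\bigcup\mathcal U$ there is a countable $\mathcal V\subseteq\mathcal U$ with $A\subseteq st(\bigcup\mathcal V,\mathcal U)$. *)

theory Defs
  imports "HOL-Analysis.Analysis"
begin

text \<open>Extent strictly bigger than omega: some closed discrete subset is uncountable.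
  (The supremum of cardinalities of closed discrete subsets exceeds omega iff some such
  subset has cardinality greater than omega.)\<close>
definition extent_gt_omega :: "'a topology \<Rightarrow> bool" where
  "extent_gt_omega X \<longleftrightarrow>
     (\<exists>D. D \<subseteq> topspace X \<and> closedin X D \<and> subtopology X D = discrete_topology D
          \<and> uncountable D)"

definition cellularity_gt_omega :: "'a topology \<Rightarrow> bool" where
  "cellularity_gt_omega Y \<longleftrightarrow>
     (\<exists>\<W>. (\<forall>W\<in>\<W>. openin Y W \<and> W \<noteq> {}) \<and> pairwise disjnt \<W> \<and> uncountable \<W>)"

definition star :: "'a set \<Rightarrow> 'a set set \<Rightarrow> 'a set" where
  "star A \<U> = \<Union>{U \<in> \<U>. U \<inter> A \<noteq> {}}"

definition set_star_lindelof :: "'a topology \<Rightarrow> bool" where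
  "set_star_lindelof Z \<longleftrightarrow>
     (\<forall>A \<U>. A \<noteq> {} \<and> A \<subseteq> topspace Z \<and> (\<forall>U\<in>\<U>. openin Z U)
            \<and> Z closure_of A \<subseteq> \<Union>\<U>
        \<longrightarrow> (\<exists>\<V>. \<V> \<subseteq> \<U> \<and> countable \<V> \<and> A \<subseteq> star (\<Union>\<V>) \<U>))"

end

theory Submission
  imports Defs
begin

text \<open>Take an uncountable closed discrete \<open>D \<subseteq> X\<close> and an uncountable cellular family
  \<open>\<W>\<close> in \<open>Y\<close>; after shrinking \<open>D\<close> we may assign to every \<open>d \<in> D\<close> its own cell \<open>W\<^sub>d\<close>
  and a point \<open>y\<^sub>d \<in> W\<^sub>d\<close>. The graph \<open>A = {(d, y\<^sub>d)}\<close> is closed in \<open>X \<times> Y\<close> because \<open>Y\<close>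
  is \<open>T\<^sub>1\<close>, and the open sets \<open>(X - (D - {d})) \<times> W\<^sub>d\<close> form a disjoint expansion of \<open>A\<close>.
  Each point of \<open>A\<close> lies in exactly one member of this cover, and that member meets
  only itself, so a countable subfamily can star-cover only countably many points
  of \<open>A\<close>.\<close>

lemma closedin_subset_of_closed_discrete:
  assumes "closedin X D" "subtopology X D = discrete_topology D" "S \<subseteq> D"
  shows "closedin X S"
  by (rule closedin_trans_full[OF _ assms(1)]) (simp add: assms(2,3))

lemma subtopology_eq_discrete_topology_subset:
  assumes "subtopology X D = discrete_topology D" "S \<subseteq> D"
  shows "subtopology X S = discrete_topology S"
  by (metis assms Int_absorb1 subtopology_discrete_topology subtopology_subtopology)

lemma uncountable_subset_inj_into_uncountable:
  assumes "uncountable A" "uncountable B"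
  obtains A' f where "A' \<subseteq> A" "uncountable A'" "inj_on f A'" "f ` A' \<subseteq> B"
proof -
  have "(card_of A, card_of B) \<in> ordLeq \<or> (card_of B, card_of A) \<in> ordLeq"
    by (rule ordLeq_total[OF card_of_Well_order card_of_Well_order])
  then show thesis
  proof
    assume "(card_of A, card_of B) \<in> ordLeq"
    then obtain f where "inj_on f A" "f ` A \<subseteq> B"
      using card_of_ordLeq[of A B, symmetric] by blast
    with assms(1) show thesis by (intro that[of A f]) auto
  next
    assume "(card_of B, card_of A) \<in> ordLeq"
    then obtain g where g: "inj_on g B" "g ` B \<subseteq> A"
      using card_of_ordLeq[of B A, symmetric] by blast
    have "uncountable (g ` B)"
      using countable_image_inj_on[OF _ g(1)] assms(2) by blast
    with g show thesis
      by (intro that[of "g ` B" "inv_into B g"]) (auto intro: inj_on_inv_into inv_into_into)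
  qed
qed

lemma not_set_star_lindelof_if_disjoint_open_expansion:
  assumes "closedin Z A" "uncountable A"
    and "\<And>a. a \<in> A \<Longrightarrow> openin Z (U a)" "\<And>a. a \<in> A \<Longrightarrow> a \<in> U a"
    and "disjoint_family_on U A"
  shows "\<not> set_star_lindelof Z"
proof
  assume star_lindelof: "set_star_lindelof Z"
  have "A \<noteq> {}"
    using assms(2) by auto
  moreover have "Z closure_of A \<subseteq> \<Union>(U ` A)"
    using closure_of_closedin[OF assms(1)] assms(4) by blast
  moreover have "\<forall>V\<in>U ` A. openin Z V"
    using assms(3) by blast
  ultimately obtain \<V> where \<V>: "\<V> \<subseteq> U ` A" "countable \<V>" "A \<subseteq> star (\<Union>\<V>) (U ` A)"
    using star_lindelof closedin_subset[OF assms(1)] unfolding set_star_lindelof_def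
    by (elim allE[of _ A] allE[of _ "U ` A"]) blast
  have same_cell: "a = b" if "a \<in> A" "b \<in> A" "x \<in> U a" "x \<in> U b" for a b x
    using disjoint_family_onD[OF assms(5) that(1,2)] that(3,4) by blast
  have "A \<subseteq> {a \<in> A. U a \<in> \<V>}"
  proof
    fix a assume a: "a \<in> A"
    then obtain b where b: "b \<in> A" "a \<in> U b" "U b \<inter> \<Union>\<V> \<noteq> {}"
      using \<V>(3) unfolding star_def by blast
    then obtain v x where "v \<in> \<V>" "x \<in> U b" "x \<in> v"
      by blast
    moreover obtain c where "c \<in> A" "v = U c"
      using \<V>(1) \<open>v \<in> \<V>\<close> by blast
    moreover have "b = a"
      using same_cell[OF b(1) a b(2) assms(4)[OF a]] .
    ultimately show "a \<in> {a \<in> A. U a \<in> \<V>}"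
      using a b(1) same_cell[of b c x] by simp
  qed
  moreover have "countable {a \<in> A. U a \<in> \<V>}"
  proof (rule countable_image_inj_on)
    show "countable (U ` {a \<in> A. U a \<in> \<V>})"
      by (rule countable_subset[OF _ \<V>(2)]) blast
    show "inj_on U {a \<in> A. U a \<in> \<V>}"
      using same_cell assms(4) by (intro inj_onI) (metis mem_Collect_eq)
  qed
  ultimately show False
    using assms(2) countable_subset by blast
qed

lemma closedin_graph_on_closed_discrete:
  assumes "closedin X D" "subtopology X D = discrete_topology D"
    and "t1_space Y" "g ` D \<subseteq> topspace Y"
  shows "closedin (prod_topology X Y) ((\<lambda>d. (d, g d)) ` D)"
  unfolding closedin_def
proof
  let ?G = "(\<lambda>d. (d, g d)) ` D"
  show "?G \<subseteq> topspace (prod_topology X Y)"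
    using closedin_subset[OF assms(1)] assms(4) by auto
  show "openin (prod_topology X Y) (topspace (prod_topology X Y) - ?G)"
  proof (subst openin_subopen, intro ballI)
    fix z assume z: "z \<in> topspace (prod_topology X Y) - ?G"
    obtain x w where zxw: "z = (x, w)" "x \<in> topspace X" "w \<in> topspace Y"
      using z by auto
    show "\<exists>T. openin (prod_topology X Y) T \<and> z \<in> T \<and> T \<subseteq> topspace (prod_topology X Y) - ?G"
    proof (cases "x \<in> D")
      case False
      have "openin (prod_topology X Y) ((topspace X - D) \<times> topspace Y)"
        using assms(1) by (simp add: openin_prod_Times_iff openin_diff)
      moreover have "(topspace X - D) \<times> topspace Y \<subseteq> topspace (prod_topology X Y) - ?G"
        by auto
      ultimately show ?thesis
        using False zxw by blast
    next
      case True
      have "closedin X (D - {x})"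
        using closedin_subset_of_closed_discrete[OF assms(1,2)] by blast
      moreover have "closedin Y {g x}"
        using closedin_t1_singleton[OF assms(3)] assms(4) True by blast
      ultimately have "openin (prod_topology X Y) ((topspace X - (D - {x})) \<times> (topspace Y - {g x}))"
        by (simp add: openin_prod_Times_iff openin_diff)
      moreover have "(topspace X - (D - {x})) \<times> (topspace Y - {g x}) \<subseteq> topspace (prod_topology X Y) - ?G"
        by auto
      moreover have "w \<noteq> g x"
        using z zxw True by auto
      ultimately show ?thesis
        using zxw by blast
    qed
  qed
qed

lemma not_set_star_lindelof_prod_if_closed_discrete_cells:
  assumes D: "closedin X D" "subtopology X D = discrete_topology D" "uncountable D"
    and "t1_space Y"
    and cell: "\<And>d. d \<in> D \<Longrightarrow> openin Y (W d)" "\<And>d. d \<in> D \<Longrightarrow> W d \<noteq> {}"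
    and "disjoint_family_on W D"
  shows "\<not> set_star_lindelof (prod_topology X Y)"
proof -
  define y where "y d = (SOME y. y \<in> W d)" for d
  have y: "y d \<in> W d" if "d \<in> D" for d
    unfolding y_def using cell(2)[OF that] by (simp add: some_in_eq)
  have y_topspace: "y ` D \<subseteq> topspace Y"
    using y cell(1) openin_subset by blast
  define A where "A = (\<lambda>d. (d, y d)) ` D"
  define U :: "'a \<times> 'b \<Rightarrow> ('a \<times> 'b) set"
    where "U z = (topspace X - (D - {fst z})) \<times> W (fst z)" for z
  show ?thesis
  proof (rule not_set_star_lindelof_if_disjoint_open_expansion)
    show "closedin (prod_topology X Y) A"
      unfolding A_def by (rule closedin_graph_on_closed_discrete[OF D(1,2) assms(4) y_topspace])
    have "inj_on (\<lambda>d. (d, y d)) D"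
      by (rule inj_onI) simp
    then show "uncountable A"
      unfolding A_def using D(3) countable_image_inj_on by blast
  next
    fix z assume "z \<in> A"
    then obtain d where d: "d \<in> D" "z = (d, y d)"
      unfolding A_def by blast
    have "closedin X (D - {d})"
      using closedin_subset_of_closed_discrete[OF D(1,2)] by blast
    then show "openin (prod_topology X Y) (U z)"
      unfolding U_def d(2) by (simp add: openin_prod_Times_iff openin_diff cell(1)[OF d(1)])
    show "z \<in> U z"
      unfolding U_def d(2) using d(1) y closedin_subset[OF D(1)] by auto
  next
    show "disjoint_family_on U A"
      unfolding disjoint_family_on_def A_def
    proof (intro ballI impI, elim imageE)
      fix a b d e assume "d \<in> D" "e \<in> D" "a = (d, y d)" "b = (e, y e)" "a \<noteq> b"
      then show "U a \<inter> U b = {}"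
        using disjoint_family_onD[OF assms(7), of d e] by (auto simp: U_def)
    qed
  qed
qed

theorem proposition3p4:
  fixes X :: "'a topology" and Y :: "'b topology"
  assumes "extent_gt_omega X"
    and "t1_space Y"
    and "cellularity_gt_omega Y"
  shows "\<not> set_star_lindelof (prod_topology X Y)"
proof -
  obtain D where D: "closedin X D" "subtopology X D = discrete_topology D" "uncountable D"
    using assms(1) unfolding extent_gt_omega_def by blast
  obtain \<W> where \<W>: "\<forall>W\<in>\<W>. openin Y W \<and> W \<noteq> {}" "pairwise disjnt \<W>" "uncountable \<W>"
    using assms(3) unfolding cellularity_gt_omega_def by blast
  obtain D' f where f: "D' \<subseteq> D" "uncountable D'" "inj_on f D'" "f ` D' \<subseteq> \<W>"
    using uncountable_subset_inj_into_uncountable[OF D(3) \<W>(3)] .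
  have D': "closedin X D'" "subtopology X D' = discrete_topology D'"
    using closedin_subset_of_closed_discrete[OF D(1,2) f(1)]
      subtopology_eq_discrete_topology_subset[OF D(2) f(1)] .
  show ?thesis
  proof (rule not_set_star_lindelof_prod_if_closed_discrete_cells[OF D' f(2) assms(2)])
    show "openin Y (f d)" "f d \<noteq> {}" if "d \<in> D'" for d
      using \<W>(1) f(4) that by blast+
    show "disjoint_family_on f D'"
      unfolding disjoint_family_on_def
    proof (intro ballI impI)
      fix d e assume "d \<in> D'" "e \<in> D'" "d \<noteq> e"
      then have "f d \<in> \<W>" "f e \<in> \<W>" "f d \<noteq> f e"
        using f(3,4) by (auto dest: inj_onD)
      then show "f d \<inter> f e = {}"
        by (rule pairwiseD[OF \<W>(2), unfolded disjnt_def])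
    qed
  qed
qed

end
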